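(* Consider the composite problem, the Stochastic Decoupling Method and the gradient-estimator condition described in the context. Assume $f$ is $L$-smooth and $\mu$-strongly convex, and $g_1,\dots,g_m,R$ are proper, closed and convex. Suppose that $v^t$ is generated by a method that satisfies the gradient-estimator condition with constants $\eta_0>0$, $\omega>0$ and a nonnegative sequence $\{\mathcal M^t\}_{t\ge0}$, and that $\eta\le\eta_0$. Then for every $t\ge1$, $$\mathbb{E}\, D_f(\overline x^t,x^* )\le \frac{1}{\omega\eta t}\mathcal L^0,$$ where $\overline x^t:=\frac1t\sum_{k=0}^{t-1}x^k$ and $\mathcal L^0:=\|x^0-x^*\|^2+\mathcal M^0+\sum_{k=1}^m\eta_k^2\|y_k^0-y_k^*\|^2$.
   Context: Problem: $\min_{x\in\mathbb{R}^d}F(x):=f(x)+\frac1m\sum_{j=1}^m g_j(x)+R(x)$, where $f:\mathbb{R}^d\to\mathbb{R}$ is differentiable and convex, and $g_1,\dots,g_m,R:\mathbb{R}^d\to\mathbb{R}\cup\{+\infty\}$ are proper closed convex functions; the set of minimizers of $F$ is nonempty. $f$ is $L$-smooth if $f(x)\le f(y)+\langle\nabla f(y),x-y\rangle+\frac L2\|x-y\|^2$ for all $x,y$, and $\mu$-strongly convex ($\mu\ge0$) if $f(x)\ge f(y)+\langle\nabla f(y),x-y\rangle+\frac\mu2\|x-y\|^2$ for all $x,y$. Bregman divergence: $D_f(x,y):=f(x)-f(y)-\langle\nabla f(y),x-y\rangle$. Proximal operator: $\mathrm{prox}_{\eta h}(x):=\arg\min_u\{h(u)+\frac1{2\eta}\|u-x\|^2\}$.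 Standing optimality assumption: there exist a minimizer $x^*$ of $F$, vectors $y_j^*\in\partial g_j(x^* )$ ($j=1,\dots,m$) and $r^*\in\partial R(x^* )$ with $\nabla f(x^* )+\frac1m\sum_j y_j^*+r^*=0$; these are fixed, and $y^*:=\frac1m\sum_j y_j^*$. Stochastic Decoupling Method: stepsize $\eta>0$, probabilities $p_1,\dots,p_m>0$ summing to $1$, $\eta_j:=\eta/(mp_j)$. Start from deterministic $x^0,y_1^0,\dots,y_m^0\in\mathbb{R}^d$, $y^0:=\frac1m\sum_j y_j^0$. For $t=0,1,\dots$: a vector $v^t$ (an estimate of $\nabla f(x^t)$) is produced by a gradient estimator; $z^t=\mathrm{prox}_{\eta R}(x^t-\eta v^t-\eta y^t)$; an index $j$ is drawn with $\Pr(j=k)=p_k$, independently of the past; $x^{t+1}=\mathrm{prox}_{\eta_j g_j}(z^t+\eta_j y_j^t)$; $y_j^{t+1}=y_j^t+\frac1{\eta_j}(z^t-x^{t+1})$ and $y_k^{t+1}=y_k^t$ for $k\ne j$; $y^{t+1}=y^t+\frac1m(y_j^{t+1}-y_j^t)$. Gradient-estimator condition: with $w^t:=x^t-\eta v^t$ and $w^*:=x^*-\eta\nabla f(x^* )$, there are constants $\eta_0>0$, $\omega>0$ and a nonnegative sequence $\{\mathcal M^t\}$ such that for any $\eta\le\eta_0$ and all $t$: (a) if $f$ is convex, $\mathbb{E}\|w^t-w^*\|^2+\mathcal M^{t+1}\le\mathbb{E}\|x^t-x^*\|^2-\omega\eta\,\mathbb{E}D_f(x^t,x^* )+\mathcal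 M^t$; (b) if $f$ is $\mu$-strongly convex, either $\mathcal M^t=0$ for all $t$, or there is $\rho>0$ with $\mathbb{E}\|w^t-w^*\|^2+\mathcal M^{t+1}\le(1-\omega\eta\mu)\mathbb{E}\|x^t-x^*\|^2+(1-\rho)\mathcal M^t$. *)

theory Defs
  imports "HOL-Probability.Probability"
begin

definition proper_fun :: "('d \<Rightarrow> ereal) \<Rightarrow> bool" where
  "proper_fun h \<longleftrightarrow> (\<forall>x. h x \<noteq> -\<infinity>) \<and> (\<exists>x. h x \<noteq> \<infinity>)"

definition closed_fun :: "('d::topological_space \<Rightarrow> ereal) \<Rightarrow> bool" where
  "closed_fun h \<longleftrightarrow> closed {(x, r::real). h x \<le> ereal r}"

definition convex_fun :: "('d::real_vector \<Rightarrow> ereal) \<Rightarrow> bool" where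
  "convex_fun h \<longleftrightarrow> (\<forall>x y. \<forall>a::real. 0 \<le> a \<and> a \<le> 1 \<longrightarrow>
      h ((1 - a) *\<^sub>R x + a *\<^sub>R y) \<le> ereal (1 - a) * h x + ereal a * h y)"

definition subgrad :: "('d::real_inner \<Rightarrow> ereal) \<Rightarrow> 'd \<Rightarrow> 'd \<Rightarrow> bool" where
  "subgrad h x y \<longleftrightarrow> h x < \<infinity> \<and> (\<forall>u. h x + ereal (y \<bullet> (u - x)) \<le> h u)"

(* the set argmin_u { h u + ||u - x||^2 / (2 eta) }; prox_{eta h}(x) is its (unique) element *)
definition prox_set :: "real \<Rightarrow> ('d::real_normed_vector \<Rightarrow> ereal) \<Rightarrow> 'd \<Rightarrow> 'd set" where
  "prox_set \<eta> h x = {u. \<forall>w. h u + ereal ((norm (u - x))\<^sup>2 / (2 * \<eta>))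
                              \<le> h w + ereal ((norm (w - x))\<^sup>2 / (2 * \<eta>))}"

definition L_smooth :: "real \<Rightarrow> ('d::real_inner \<Rightarrow> real) \<Rightarrow> ('d \<Rightarrow> 'd) \<Rightarrow> bool" where
  "L_smooth L f gradf \<longleftrightarrow>
     (\<forall>x y. f x \<le> f y + gradf y \<bullet> (x - y) + L / 2 * (norm (x - y))\<^sup>2)"

definition strongly_convex :: "real \<Rightarrow> ('d::real_inner \<Rightarrow> real) \<Rightarrow> ('d \<Rightarrow> 'd) \<Rightarrow> bool" where
  "strongly_convex \<mu> f gradf \<longleftrightarrow>
     (\<forall>x y. f x \<ge> f y + gradf y \<bullet> (x - y) + \<mu> / 2 * (norm (x - y))\<^sup>2)"

definition bregman :: "('d::real_inner \<Rightarrow> real) \<Rightarrow> ('d \<Rightarrow> 'd) \<Rightarrow> 'd \<Rightarrow> 'd \<Rightarrow> real" where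
  "bregman f gradf x y = f x - f y - gradf y \<bullet> (x - y)"

definition Fobj :: "('d \<Rightarrow> real) \<Rightarrow> nat \<Rightarrow> (nat \<Rightarrow> 'd \<Rightarrow> ereal) \<Rightarrow> ('d \<Rightarrow> ereal) \<Rightarrow> 'd \<Rightarrow> ereal" where
  "Fobj f m g R x = ereal (f x) + ereal (1 / real m) * (\<Sum>j\<in>{1..m}. g j x) + R x"

end

theory Submission
  imports Defs
begin

text \<open>With w^t = x^t - \<eta> v^t, w^* = x^* - \<eta> \<nabla>f(x^*) and \<eta>_k = \<eta> / (m p_k), the proof tracks
     \<Phi>_t = E |x^t - x^*|^2 + \<Sum>_k \<eta>_k^2 E |y_k^t - y_k^*|^2.
   The R-step is a resolvent step, hence firmly nonexpansive, and x^* = prox_{\<eta>R}(x^* + \<eta> r^*);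
   with the optimality condition this gives
     |z^t - x^*|^2 + 2\<eta> (z^t - x^*, ybar^t - y^*) \<le> |w^t - w^*|^2.
   For the sampled block j, the g_j-step and monotonicity of \<partial>g_j give
     |x^(t+1) - x^*|^2 + \<eta>_j^2 |y_j^(t+1) - y_j^*|^2
       \<le> |z^t - x^*|^2 + 2\<eta>_j (z^t - x^*, y_j^t - y_j^*) + \<eta>_j^2 |y_j^t - y_j^*|^2,
   and the other dual blocks do not move.  As j is drawn with probability p_j independently of
   the past and p_j \<eta>_j = \<eta>/m, the cross terms average to 2\<eta> (z^t - x^*, ybar^t - y^*), whence
   \<Phi>_(t+1) \<le> \<Phi>_t + E |w^t - w^*|^2 - E |x^t - x^*|^2.  Together with the estimator condition (a),
   \<Phi>_t + M^t decreases by at least \<omega>\<eta> E D_f(x^t, x^*) per step; telescoping and convexity of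
   D_f(., x^*) bound the Bregman gap of the average iterate.\<close>

lemma power2_norm_add_scaleR:
  fixes A B :: "'a::real_inner"
  shows "(norm (A + c *\<^sub>R B))\<^sup>2 = (norm A)\<^sup>2 + 2 * (c * (A \<bullet> B)) + c\<^sup>2 * (norm B)\<^sup>2"
  unfolding power2_norm_eq_inner by (simp add: inner_add_left inner_add_right inner_commute power2_eq_square)

lemma power2_norm_add_scaleR_ge:
  fixes c :: real and C D :: "'a::real_inner"
  assumes "0 \<le> c * (D \<bullet> C)"
  shows "(norm D)\<^sup>2 + c\<^sup>2 * (norm C)\<^sup>2 \<le> (norm (D + c *\<^sub>R C))\<^sup>2"
  using assms by (simp add: power2_norm_add_scaleR)

lemma power2_norm_add_inner_le:
  fixes u d e :: "'a::real_inner"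
  assumes "(norm u)\<^sup>2 \<le> d \<bullet> u"
  shows "(norm u)\<^sup>2 + 2 * (u \<bullet> (e - d)) \<le> (norm e)\<^sup>2"
proof -
  have "0 \<le> (norm (u - e))\<^sup>2" by simp
  then show ?thesis using assms unfolding power2_norm_eq_inner
    by (simp add: inner_diff_left inner_diff_right inner_commute)
qed

lemma norm_le_if_power2_norm_le_inner:
  fixes u d :: "'a::real_inner"
  assumes "(norm u)\<^sup>2 \<le> d \<bullet> u"
  shows "norm u \<le> norm d"
proof (cases "u = 0")
  case False
  have "norm u * norm u \<le> norm d * norm u"
    using assms norm_cauchy_schwarz[of d u] by (simp add: power2_eq_square)
  then show ?thesis using False by (simp add: mult_le_cancel_right)
qed simp

lemma sum_update_single:
  fixes f f' :: "'i \<Rightarrow> 'a::ab_group_add"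
  assumes "finite A" "j \<in> A" "\<And>k. k \<in> A \<Longrightarrow> k \<noteq> j \<Longrightarrow> f' k = f k"
  shows "sum f' A = sum f A + (f' j - f j)"
proof -
  have "sum f' A = f' j + sum f' (A - {j})" by (rule sum.remove[OF assms(1,2)])
  also have "sum f' (A - {j}) = sum f (A - {j})" using assms(3) by (intro sum.cong) auto
  also have "\<dots> = sum f A - f j" using sum.remove[OF assms(1,2), of f] by simp
  finally show ?thesis by simp
qed

lemma running_average_eq:
  fixes ybar :: "nat \<Rightarrow> 'a::real_vector" and y :: "nat \<Rightarrow> nat \<Rightarrow> 'a" and J :: "nat \<Rightarrow> nat"
  assumes "ybar 0 = (1 / real m) *\<^sub>R (\<Sum>j\<in>{1..m}. y 0 j)"
    and "\<And>t. J t \<in> {1..m}"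
    and "\<And>t j. j \<in> {1..m} \<Longrightarrow> j \<noteq> J t \<Longrightarrow> y (Suc t) j = y t j"
    and "\<And>t. ybar (Suc t) = ybar t + (1 / real m) *\<^sub>R (y (Suc t) (J t) - y t (J t))"
  shows "ybar t = (1 / real m) *\<^sub>R (\<Sum>j\<in>{1..m}. y t j)"
proof (induction t)
  case (Suc t)
  have "(\<Sum>j\<in>{1..m}. y (Suc t) j) = (\<Sum>j\<in>{1..m}. y t j) + (y (Suc t) (J t) - y t (J t))"
    using assms(2,3) by (intro sum_update_single) auto
  then show ?case using Suc.IH assms(4) by (simp add: scaleR_add_right)
qed (rule assms(1))

lemma sum_le_if_descent:
  fixes \<Phi> D :: "nat \<Rightarrow> real"
  assumes "\<And>k. \<Phi> (Suc k) \<le> \<Phi> k - D k"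
  shows "(\<Sum>k<t. D k) \<le> \<Phi> 0 - \<Phi> t"
proof (induction t)
  case (Suc t)
  then show ?case using assms[of t] by simp
qed simp

lemma le_zero_if_le_mult_all:
  fixes c e :: real
  assumes "0 \<le> e" and "\<And>a. 0 < a \<Longrightarrow> a \<le> 1 \<Longrightarrow> c \<le> a * e"
  shows "c \<le> 0"
proof (rule ccontr)
  assume "\<not> c \<le> 0"
  define a where "a = min 1 (c / (2 * e + 1))"
  have "0 < a" "a \<le> 1" using \<open>\<not> c \<le> 0\<close> assms(1) by (auto simp: a_def)
  have "a * e \<le> c / (2 * e + 1) * e" unfolding a_def using assms(1) by (intro mult_right_mono) auto
  also have "\<dots> < c" using \<open>\<not> c \<le> 0\<close> assms(1) by (simp add: field_simps add_pos_nonneg)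
  finally show False using assms(2)[OF \<open>0 < a\<close> \<open>a \<le> 1\<close>] by simp
qed

lemma proper_fun_finite:
  assumes "proper_fun h" "h u \<noteq> \<infinity>"
  obtains r where "h u = ereal r"
  using assms unfolding proper_fun_def by (cases "h u") auto

lemma prox_set_segment_ineq:
  fixes h :: "'d::real_inner \<Rightarrow> ereal"
  assumes convex: "convex_fun h" and "0 < \<eta>" and u: "u \<in> prox_set \<eta> h q"
    and hu: "h u = ereal hu" and hw: "h w = ereal hw" and a: "0 < a" "a \<le> 1"
  shows "hu - ((u - q) \<bullet> (w - u)) / \<eta> - hw \<le> a * ((norm (w - u))\<^sup>2 / (2 * \<eta>))"
proof -
  define d where "d = ((u - q) \<bullet> (w - u)) / \<eta>"
  define e where "e = (norm (w - u))\<^sup>2 / (2 * \<eta>)"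
  define wa where "wa = (1 - a) *\<^sub>R u + a *\<^sub>R w"
  have "h wa \<le> ereal ((1 - a) * hu + a * hw)"
    using convex a unfolding convex_fun_def wa_def
    by (metis hu hw less_eq_real_def times_ereal.simps(1) plus_ereal.simps(1))
  moreover have "h u + ereal ((norm (u - q))\<^sup>2 / (2 * \<eta>)) \<le> h wa + ereal ((norm (wa - q))\<^sup>2 / (2 * \<eta>))"
    using u unfolding prox_set_def by auto
  ultimately have "h u + ereal ((norm (u - q))\<^sup>2 / (2 * \<eta>))
      \<le> ereal ((1 - a) * hu + a * hw) + ereal ((norm (wa - q))\<^sup>2 / (2 * \<eta>))"
    using add_right_mono order_trans by blast
  then have "hu + (norm (u - q))\<^sup>2 / (2 * \<eta>) \<le> (1 - a) * hu + a * hw + (norm (wa - q))\<^sup>2 / (2 * \<eta>)"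
    by (simp add: hu)
  moreover have "wa - q = (u - q) + a *\<^sub>R (w - u)" unfolding wa_def by (simp add: algebra_simps)
  then have "(norm (wa - q))\<^sup>2 = (norm (u - q))\<^sup>2 + 2 * (a * ((u - q) \<bullet> (w - u))) + a\<^sup>2 * (norm (w - u))\<^sup>2"
    by (simp only: power2_norm_add_scaleR)
  then have "(norm (wa - q))\<^sup>2 / (2 * \<eta>) = (norm (u - q))\<^sup>2 / (2 * \<eta>) + a * d + a * (a * e)"
    using \<open>0 < \<eta>\<close> unfolding d_def e_def by (simp add: field_simps power2_eq_square)
  ultimately have "a * hu \<le> a * (hw + d + a * e)"
    by (simp add: algebra_simps)
  then have "hu - d - hw \<le> a * e" using a by simp
  then show ?thesis unfolding d_def e_def .
qed

lemma prox_set_subgrad: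
  fixes h :: "'d::real_inner \<Rightarrow> ereal"
  assumes proper: "proper_fun h" and convex: "convex_fun h" and "0 < \<eta>"
    and u: "u \<in> prox_set \<eta> h q"
  shows "subgrad h u ((1 / \<eta>) *\<^sub>R (q - u))"
proof -
  obtain w0 where "h w0 \<noteq> \<infinity>" using proper unfolding proper_fun_def by auto
  then have "h w0 + ereal ((norm (w0 - q))\<^sup>2 / (2 * \<eta>)) \<noteq> \<infinity>" by simp
  then have hu_finite: "h u \<noteq> \<infinity>" using u unfolding prox_set_def by force
  then obtain hu where hu: "h u = ereal hu" by (rule proper_fun_finite[OF proper])
  have "h u + ereal (((1 / \<eta>) *\<^sub>R (q - u)) \<bullet> (w - u)) \<le> h w" for w
  proof (cases "h w = \<infinity>")
    case False
    then obtain hw where hw: "h w = ereal hw" by (rule proper_fun_finite[OF proper])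
    have "hu - ((u - q) \<bullet> (w - u)) / \<eta> - hw \<le> 0"
      using prox_set_segment_ineq[OF convex \<open>0 < \<eta>\<close> u hu hw] \<open>0 < \<eta>\<close>
      by (intro le_zero_if_le_mult_all[of "(norm (w - u))\<^sup>2 / (2 * \<eta>)"]) auto
    moreover have "((1 / \<eta>) *\<^sub>R (q - u)) \<bullet> (w - u) = - (((u - q) \<bullet> (w - u)) / \<eta>)"
      by (simp add: inner_diff_left diff_divide_distrib)
    ultimately show ?thesis using hu hw by simp
  qed simp
  then show ?thesis using hu_finite unfolding subgrad_def by auto
qed

lemma subgrad_monotone:
  assumes "proper_fun h" "subgrad h u1 g1" "subgrad h u2 g2"
  shows "0 \<le> (g1 - g2) \<bullet> (u1 - u2)"
proof -
  obtain a1 where a1: "h u1 = ereal a1"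
    using assms(2) unfolding subgrad_def by (metis less_ereal.simps(2) proper_fun_finite[OF assms(1)])
  obtain a2 where a2: "h u2 = ereal a2"
    using assms(3) unfolding subgrad_def by (metis less_ereal.simps(2) proper_fun_finite[OF assms(1)])
  have "a1 + g1 \<bullet> (u2 - u1) \<le> a2" "a2 + g2 \<bullet> (u1 - u2) \<le> a1"
    using assms(2,3) a1 a2 unfolding subgrad_def by (metis ereal_less_eq(3) plus_ereal.simps(1))+
  then show ?thesis by (simp add: inner_diff_left inner_diff_right)
qed

lemma subgrad_resolvent_firmly_nonexpansive:
  assumes "proper_fun h" "0 < \<eta>"
    and "subgrad h u1 ((1 / \<eta>) *\<^sub>R (q1 - u1))" "subgrad h u2 ((1 / \<eta>) *\<^sub>R (q2 - u2))"
  shows "(norm (u1 - u2))\<^sup>2 \<le> (q1 - q2) \<bullet> (u1 - u2)"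
proof -
  have "0 \<le> ((1 / \<eta>) *\<^sub>R ((q1 - q2) - (u1 - u2))) \<bullet> (u1 - u2)"
    using subgrad_monotone[OF assms(1,3,4)] by (simp add: algebra_simps)
  then have "0 \<le> ((q1 - q2) - (u1 - u2)) \<bullet> (u1 - u2)"
    using \<open>0 < \<eta>\<close> by (simp add: zero_le_divide_iff)
  then show ?thesis by (simp add: inner_diff_left power2_norm_eq_inner)
qed

lemma strongly_convex_gradient_ineq:
  assumes "strongly_convex \<mu> f gradf" "0 \<le> \<mu>"
  shows "f b + gradf b \<bullet> (a - b) \<le> f a"
proof -
  have "f b + gradf b \<bullet> (a - b) + \<mu> / 2 * (norm (a - b))\<^sup>2 \<le> f a"
    using assms(1) unfolding strongly_convex_def by blast
  moreover have "0 \<le> \<mu> / 2 * (norm (a - b))\<^sup>2" using assms(2) by simp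
  ultimately show ?thesis by linarith
qed

lemma bregman_nonneg:
  assumes "strongly_convex \<mu> f gradf" "0 \<le> \<mu>"
  shows "0 \<le> bregman f gradf a b"
  using strongly_convex_gradient_ineq[OF assms, of b a] unfolding bregman_def by linarith

lemma bregman_le_if_L_smooth:
  assumes "L_smooth L f gradf"
  shows "bregman f gradf a b \<le> L / 2 * (norm (a - b))\<^sup>2"
proof -
  have "f a \<le> f b + gradf b \<bullet> (a - b) + L / 2 * (norm (a - b))\<^sup>2"
    using assms unfolding L_smooth_def by blast
  then show ?thesis unfolding bregman_def by linarith
qed

lemma bregman_average_le:
  fixes X :: "nat \<Rightarrow> 'd::real_inner"
  assumes "strongly_convex \<mu> f gradf" "0 \<le> \<mu>" "0 < t"
  shows "bregman f gradf ((1 / real t) *\<^sub>R (\<Sum>k<t. X k)) c \<le> (1 / real t) * (\<Sum>k<t. bregman f gradf (X k) c)"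
proof -
  define avg where "avg = (1 / real t) *\<^sub>R (\<Sum>k<t. X k)"
  have sum_X: "(\<Sum>k<t. X k) = real t *\<^sub>R avg" unfolding avg_def using \<open>0 < t\<close> by simp
  have "(\<Sum>k<t. f avg + gradf avg \<bullet> (X k - avg)) \<le> (\<Sum>k<t. f (X k))"
    by (intro sum_mono strongly_convex_gradient_ineq[OF assms(1,2)])
  moreover have "(\<Sum>k<t. f avg + gradf avg \<bullet> (X k - avg)) = real t * f avg + gradf avg \<bullet> ((\<Sum>k<t. X k) - real t *\<^sub>R avg)"
    by (simp add: sum.distrib inner_sum_right[symmetric] sum_subtractf sum_constant_scaleR)
  ultimately have "real t * f avg \<le> (\<Sum>k<t. f (X k))" unfolding sum_X by simp
  then have "f avg \<le> (1 / real t) * (\<Sum>k<t. f (X k))"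
    using \<open>0 < t\<close> by (simp add: field_simps)
  moreover have "(\<Sum>k<t. bregman f gradf (X k) c)
      = (\<Sum>k<t. f (X k)) - real t * f c - gradf c \<bullet> ((\<Sum>k<t. X k) - real t *\<^sub>R c)"
    unfolding bregman_def by (simp add: sum_subtractf inner_sum_right[symmetric] sum_constant_scaleR)
  then have "(\<Sum>k<t. bregman f gradf (X k) c) = (\<Sum>k<t. f (X k)) - real t * f c - real t * (gradf c \<bullet> (avg - c))"
    unfolding sum_X by (simp add: scaleR_diff_right[symmetric])
  then have "(1 / real t) * (\<Sum>k<t. bregman f gradf (X k) c) = (1 / real t) * (\<Sum>k<t. f (X k)) - f c - gradf c \<bullet> (avg - c)"
    using \<open>0 < t\<close> by (simp add: field_simps)
  ultimately show ?thesis unfolding bregman_def avg_def[symmetric] by linarith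
qed

lemma borel_measurable_if_dist_le:
  fixes q :: "'s \<Rightarrow> 'a::metric_space" and Z :: "'s \<Rightarrow> 'b::metric_space"
  assumes q: "q \<in> borel_measurable F"
    and dist: "\<And>s1 s2. s1 \<in> space F \<Longrightarrow> s2 \<in> space F \<Longrightarrow> dist (Z s1) (Z s2) \<le> dist (q s1) (q s2)"
  shows "Z \<in> borel_measurable F"
proof -
  \<comment> \<open>Z factors as P \<circ> q with P 1-Lipschitz on the range of q\<close>
  define P where "P a = Z (SOME s. s \<in> space F \<and> q s = a)" for a
  have PZ: "P (q s) = Z s" if "s \<in> space F" for s
  proof -
    define s' where "s' = (SOME s'. s' \<in> space F \<and> q s' = q s)"
    have "s' \<in> space F" "q s' = q s"
      using someI_ex[of "\<lambda>s'. s' \<in> space F \<and> q s' = q s"] that unfolding s'_def by blast+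
    then have "dist (Z s') (Z s) \<le> 0" using dist[OF _ that, of s'] by simp
    then show ?thesis unfolding P_def s'_def[symmetric] by simp
  qed
  have "lipschitz_on 1 (q ` space F) P"
    unfolding lipschitz_on_def using dist by (auto simp: PZ)
  then have "P \<in> borel_measurable (restrict_space borel (q ` space F))"
    by (intro borel_measurable_continuous_on_restrict lipschitz_on_continuous_on)
  moreover have "q \<in> measurable F (restrict_space borel (q ` space F))"
    using q by (intro measurable_restrict_space2) auto
  ultimately have "(\<lambda>s. P (q s)) \<in> borel_measurable F"
    by (rule measurable_compose[rotated])
  then show ?thesis using PZ measurable_cong[of F "\<lambda>s. P (q s)" Z] by simp
qed

lemma (in finite_measure) restr_to_subalg_density_indicator:
  assumes sub: "subalgebra M F" and A: "A \<in> sets M"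
    and indep: "\<And>B. B \<in> sets F \<Longrightarrow> measure M (B \<inter> A) = measure M B * c" and "0 \<le> c"
  shows "restr_to_subalg (density M (\<lambda>s. ennreal (indicator A s))) F
    = density (restr_to_subalg M F) (\<lambda>_. ennreal c)"
    (is "restr_to_subalg ?D F = density ?M' _")
proof (rule measure_eqI)
  have subD: "subalgebra ?D F" using sub unfolding subalgebra_def by simp
  then show "sets (restr_to_subalg ?D F) = sets (density ?M' (\<lambda>_. ennreal c))"
    using sub by (simp add: sets_restr_to_subalg)
  fix B assume "B \<in> sets (restr_to_subalg ?D F)"
  then have B: "B \<in> sets F" using subD by (simp add: sets_restr_to_subalg)
  then have BM: "B \<in> sets M" using sub unfolding subalgebra_def by auto
  have "emeasure (restr_to_subalg ?D F) B = emeasure ?D B"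
    using emeasure_restr_to_subalg[OF subD B] .
  also have "\<dots> = (\<integral>\<^sup>+s. ennreal (indicator A s) * indicator B s \<partial>M)"
    using A BM by (intro emeasure_density) auto
  also have "\<dots> = (\<integral>\<^sup>+s. indicator (B \<inter> A) s \<partial>M)"
    by (intro nn_integral_cong) (auto split: split_indicator)
  also have "\<dots> = ennreal (measure M B * c)"
    using A BM indep[OF B] by (simp add: emeasure_eq_measure)
  also have "\<dots> = ennreal c * emeasure ?M' B"
    using emeasure_restr_to_subalg[OF sub B] \<open>0 \<le> c\<close>
    by (simp add: emeasure_eq_measure ennreal_mult mult.commute)
  also have "\<dots> = emeasure (density ?M' (\<lambda>_. ennreal c)) B"
    using sub B by (simp add: sets_restr_to_subalg emeasure_density_const)
  finally show "emeasure (restr_to_subalg ?D F) B = emeasure (density ?M' (\<lambda>_. ennreal c)) B" .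
qed

lemma (in finite_measure) integral_mult_indicator_indep:
  fixes \<phi> :: "'a \<Rightarrow> real"
  assumes sub: "subalgebra M F" and A: "A \<in> sets M"
    and indep: "\<And>B. B \<in> sets F \<Longrightarrow> measure M (B \<inter> A) = measure M B * c"
    and "0 \<le> c" and \<phi>: "\<phi> \<in> borel_measurable F"
  shows "(\<integral>s. \<phi> s * indicator A s \<partial>M) = c * (\<integral>s. \<phi> s \<partial>M)"
proof -
  define D where "D = density M (\<lambda>s. ennreal (indicator A s))"
  define M' where "M' = restr_to_subalg M F"
  have subD: "subalgebra D F" using sub unfolding D_def subalgebra_def by simp
  have \<phi>M: "\<phi> \<in> borel_measurable M" using measurable_from_subalg[OF sub \<phi>] .
  have \<phi>M': "\<phi> \<in> borel_measurable M'" unfolding M'_def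
    by (subst measurable_cong_sets[OF sets_restr_to_subalg[OF sub] refl]) (rule \<phi>)
  have "(\<integral>s. \<phi> s * indicator A s \<partial>M) = (\<integral>s. indicator A s *\<^sub>R \<phi> s \<partial>M)"
    by (intro Bochner_Integration.integral_cong) (auto split: split_indicator)
  also have "\<dots> = (\<integral>s. \<phi> s \<partial>D)"
    unfolding D_def using \<phi>M A by (intro integral_density[symmetric]) auto
  also have "\<dots> = (\<integral>s. \<phi> s \<partial>restr_to_subalg D F)"
    using integral_subalgebra2[OF subD \<phi>] by simp
  also have "\<dots> = (\<integral>s. c * \<phi> s \<partial>M')"
    using restr_to_subalg_density_indicator[OF assms(1-4)] \<phi>M' \<open>0 \<le> c\<close> integral_density[of \<phi> M' "\<lambda>_. c"]
    unfolding D_def M'_def by simp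
  also have "\<dots> = c * (\<integral>s. \<phi> s \<partial>M)"
    unfolding M'_def using integral_subalgebra2[OF sub \<phi>] by simp
  finally show ?thesis .
qed

definition square_integrable :: "'s measure \<Rightarrow> ('s \<Rightarrow> 'a::real_normed_vector) \<Rightarrow> bool" where
  "square_integrable M f \<longleftrightarrow> f \<in> borel_measurable M \<and> integrable M (\<lambda>s. (norm (f s))\<^sup>2)"

lemma power2_norm_add_le:
  fixes a b :: "'a::real_normed_vector"
  shows "(norm (a + b))\<^sup>2 \<le> 2 * (norm a)\<^sup>2 + 2 * (norm b)\<^sup>2"
proof -
  have "(norm (a + b))\<^sup>2 \<le> (norm a + norm b)\<^sup>2" by (simp add: norm_triangle_ineq power_mono)
  also have "\<dots> \<le> 2 * (norm a)\<^sup>2 + 2 * (norm b)\<^sup>2"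
    using sum_squares_bound[of "norm a" "norm b"] by (simp add: power2_eq_square algebra_simps)
  finally show ?thesis .
qed

lemma square_integrable_add:
  fixes f g :: "'s \<Rightarrow> 'a::{real_normed_vector, second_countable_topology}"
  assumes "square_integrable M f" "square_integrable M g"
  shows "square_integrable M (\<lambda>s. f s + g s)"
proof -
  have meas: "(\<lambda>s. f s + g s) \<in> borel_measurable M"
    using assms unfolding square_integrable_def by auto
  have "integrable M (\<lambda>s. 2 * (norm (f s))\<^sup>2 + 2 * (norm (g s))\<^sup>2)"
    using assms unfolding square_integrable_def by auto
  then have "integrable M (\<lambda>s. (norm (f s + g s))\<^sup>2)"
    by (rule Bochner_Integration.integrable_bound) (use meas power2_norm_add_le in auto)
  then show ?thesis using meas unfolding square_integrable_def by auto
qed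

lemma square_integrable_scaleR:
  fixes f :: "'s \<Rightarrow> 'a::{real_normed_vector, second_countable_topology}"
  assumes "square_integrable M f"
  shows "square_integrable M (\<lambda>s. c *\<^sub>R f s)"
  using assms unfolding square_integrable_def by (auto simp: power_mult_distrib)

lemma square_integrable_diff:
  fixes f g :: "'s \<Rightarrow> 'a::{real_normed_vector, second_countable_topology}"
  assumes "square_integrable M f" "square_integrable M g"
  shows "square_integrable M (\<lambda>s. f s - g s)"
  using square_integrable_add[OF assms(1) square_integrable_scaleR[OF assms(2), of "-1"]] by simp

lemma square_integrable_const:
  fixes c :: "'a::{real_normed_vector, second_countable_topology}"
  assumes "finite_measure M"
  shows "square_integrable M (\<lambda>s. c)"
  using finite_measure.integrable_const[OF assms] unfolding square_integrable_def by auto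

lemma square_integrable_sum:
  fixes f :: "'i \<Rightarrow> 's \<Rightarrow> 'a::{real_normed_vector, second_countable_topology}"
  assumes "finite_measure M" "\<And>i. i \<in> I \<Longrightarrow> square_integrable M (f i)"
  shows "square_integrable M (\<lambda>s. \<Sum>i\<in>I. f i s)"
  using assms(2)
proof (induction I rule: infinite_finite_induct)
  case (infinite I)
  then show ?case using square_integrable_const[OF assms(1), of 0] by simp
next
  case empty
  then show ?case using square_integrable_const[OF assms(1), of 0] by simp
next
  case (insert i I)
  then show ?case using square_integrable_add[of M "f i" "\<lambda>s. \<Sum>i\<in>I. f i s"] by simp
qed

lemma square_integrable_cong:
  assumes "\<And>s. s \<in> space M \<Longrightarrow> f s = g s" "square_integrable M f"
  shows "square_integrable M g"
proof -
  have "g \<in> borel_measurable M" using assms measurable_cong[of M f g] unfolding square_integrable_def by auto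
  moreover have "integrable M (\<lambda>s. (norm (g s))\<^sup>2)"
    using assms Bochner_Integration.integrable_cong[of M M "\<lambda>s. (norm (f s))\<^sup>2" "\<lambda>s. (norm (g s))\<^sup>2"]
    unfolding square_integrable_def by auto
  ultimately show ?thesis unfolding square_integrable_def by auto
qed

lemma square_integrable_if_norm_le:
  fixes f :: "'s \<Rightarrow> 'a::{real_normed_vector, second_countable_topology}"
    and g :: "'s \<Rightarrow> 'b::{real_normed_vector, second_countable_topology}"
  assumes "square_integrable M g" "f \<in> borel_measurable M" "\<And>s. s \<in> space M \<Longrightarrow> norm (f s) \<le> norm (g s)"
  shows "square_integrable M f"
proof -
  have "integrable M (\<lambda>s. (norm (f s))\<^sup>2)"
    by (rule Bochner_Integration.integrable_bound[of _ "\<lambda>s. (norm (g s))\<^sup>2"])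
       (use assms in \<open>auto simp: square_integrable_def intro!: AE_I2 power_mono\<close>)
  then show ?thesis using assms unfolding square_integrable_def by auto
qed

lemma integrable_inner_if_square_integrable:
  fixes f g :: "'s \<Rightarrow> 'a::{real_inner, second_countable_topology}"
  assumes "square_integrable M f" "square_integrable M g"
  shows "integrable M (\<lambda>s. f s \<bullet> g s)"
proof -
  have meas: "(\<lambda>s. f s \<bullet> g s) \<in> borel_measurable M"
    using assms unfolding square_integrable_def by auto
  have "integrable M (\<lambda>s. (norm (f s))\<^sup>2 + (norm (g s))\<^sup>2)"
    using assms unfolding square_integrable_def by auto
  moreover have "norm (a \<bullet> b) \<le> norm ((norm a)\<^sup>2 + (norm b)\<^sup>2)" for a b :: 'a
  proof -
    have "\<bar>a \<bullet> b\<bar> \<le> norm a * norm b" by (rule Cauchy_Schwarz_ineq2)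
    also have "\<dots> \<le> (norm a)\<^sup>2 + (norm b)\<^sup>2"
      using sum_squares_bound[of "norm a" "norm b"] mult_nonneg_nonneg[OF norm_ge_zero norm_ge_zero, of a b]
      unfolding power2_eq_square by linarith
    finally show ?thesis by simp
  qed
  ultimately show ?thesis by (intro Bochner_Integration.integrable_bound[OF _ meas]) auto
qed

lemma integrable_bregman:
  fixes X :: "'s \<Rightarrow> 'd::euclidean_space"
  assumes "continuous_on UNIV f" "L_smooth L f gradf" "strongly_convex \<mu> f gradf" "0 \<le> \<mu>"
    and "X \<in> borel_measurable M" "integrable M (\<lambda>s. (norm (X s - c))\<^sup>2)"
  shows "integrable M (\<lambda>s. bregman f gradf (X s) c)"
proof (rule Bochner_Integration.integrable_bound)
  show "integrable M (\<lambda>s. L / 2 * (norm (X s - c))\<^sup>2)" using assms(6) by simp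
  have [measurable]: "f \<in> borel_measurable borel" "X \<in> borel_measurable M"
    using assms(1,5) by (auto intro: borel_measurable_continuous_onI)
  show "(\<lambda>s. bregman f gradf (X s) c) \<in> borel_measurable M"
    unfolding bregman_def by measurable
  show "AE s in M. norm (bregman f gradf (X s) c) \<le> norm (L / 2 * (norm (X s - c))\<^sup>2)"
  proof (intro AE_I2)
    fix s
    have "norm (bregman f gradf (X s) c) = bregman f gradf (X s) c"
      using bregman_nonneg[OF assms(3,4)] by simp
    also have "\<dots> \<le> L / 2 * (norm (X s - c))\<^sup>2" by (rule bregman_le_if_L_smooth[OF assms(2)])
    finally show "norm (bregman f gradf (X s) c) \<le> norm (L / 2 * (norm (X s - c))\<^sup>2)" by simp
  qed
qed

lemma integral_bregman_average_le:
  fixes X :: "nat \<Rightarrow> 's \<Rightarrow> 'd::real_inner"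
  assumes "strongly_convex \<mu> f gradf" "0 \<le> \<mu>" "0 < t"
    and "\<And>k. integrable M (\<lambda>s. bregman f gradf (X k s) c)"
  shows "(\<integral>s. bregman f gradf ((1 / real t) *\<^sub>R (\<Sum>k<t. X k s)) c \<partial>M)
    \<le> (1 / real t) * (\<Sum>k<t. \<integral>s. bregman f gradf (X k s) c \<partial>M)"
proof -
  have "(\<integral>s. bregman f gradf ((1 / real t) *\<^sub>R (\<Sum>k<t. X k s)) c \<partial>M)
      \<le> (\<integral>s. (1 / real t) * (\<Sum>k<t. bregman f gradf (X k s) c) \<partial>M)"
    using assms bregman_nonneg[OF assms(1,2)]
    by (intro integral_mono' bregman_average_le integrable_mult_right Bochner_Integration.integrable_sum)
       (auto intro!: sum_nonneg divide_nonneg_nonneg)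
  also have "\<dots> = (1 / real t) * (\<Sum>k<t. \<integral>s. bregman f gradf (X k s) c \<partial>M)"
    using assms(4) by (simp add: Bochner_Integration.integral_sum)
  finally show ?thesis .
qed

text \<open>The parameter gstar stands for \<nabla>f(x^*); the smooth part f only enters through the
  estimator condition.\<close>

locale stochastic_decoupling = prob_space M
  for M :: "'s measure" and F :: "nat \<Rightarrow> 's measure"
    and m :: nat and p :: "nat \<Rightarrow> real" and \<eta> :: real
    and R :: "'d::euclidean_space \<Rightarrow> ereal" and g :: "nat \<Rightarrow> 'd \<Rightarrow> ereal"
    and xstar :: 'd and ystar :: "nat \<Rightarrow> 'd" and rstar gstar :: 'd
    and x v z ybar :: "nat \<Rightarrow> 's \<Rightarrow> 'd" and y :: "nat \<Rightarrow> nat \<Rightarrow> 's \<Rightarrow> 'd"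
    and J :: "nat \<Rightarrow> 's \<Rightarrow> nat" +
  assumes m_pos: "1 \<le> m" and eta_pos: "0 < \<eta>" and p_pos: "\<And>j. j \<in> {1..m} \<Longrightarrow> 0 < p j"
    and R_proper: "proper_fun R" and R_convex: "convex_fun R"
    and g_proper: "\<And>j. j \<in> {1..m} \<Longrightarrow> proper_fun (g j)"
    and g_convex: "\<And>j. j \<in> {1..m} \<Longrightarrow> convex_fun (g j)"
    and ystar_subgrad: "\<And>j. j \<in> {1..m} \<Longrightarrow> subgrad (g j) xstar (ystar j)"
    and rstar_subgrad: "subgrad R xstar rstar"
    and optimality: "gstar + (1 / real m) *\<^sub>R (\<Sum>j\<in>{1..m}. ystar j) + rstar = 0"
    and F_subalgebra: "\<And>t. subalgebra M (F t)"
    and x_measurable: "\<And>t. x t \<in> borel_measurable (F t)"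
    and v_measurable: "\<And>t. v t \<in> borel_measurable (F t)"
    and y_measurable: "\<And>t j. y t j \<in> borel_measurable (F t)"
    and J_measurable: "\<And>t. J t \<in> measurable (F (Suc t)) (count_space UNIV)"
    and x_square_integrable: "\<And>t. integrable M (\<lambda>s. (norm (x t s))\<^sup>2)"
    and v_square_integrable: "\<And>t. integrable M (\<lambda>s. (norm (v t s))\<^sup>2)"
    and y_square_integrable: "\<And>t j. integrable M (\<lambda>s. (norm (y t j s))\<^sup>2)"
    and J_range: "\<And>t s. s \<in> space M \<Longrightarrow> J t s \<in> {1..m}"
    and J_indep: "\<And>t k A. A \<in> sets (F t) \<Longrightarrow> k \<in> {1..m} \<Longrightarrow>
        measure M (A \<inter> {s \<in> space M. J t s = k}) = measure M A * p k"
    and ybar_average: "\<And>t s. s \<in> space M \<Longrightarrow> ybar t s = (1 / real m) *\<^sub>R (\<Sum>j\<in>{1..m}. y t j s)"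
    and z_step: "\<And>t s. s \<in> space M \<Longrightarrow>
        z t s \<in> prox_set \<eta> R (x t s - \<eta> *\<^sub>R v t s - \<eta> *\<^sub>R ybar t s)"
    and x_step: "\<And>t s. s \<in> space M \<Longrightarrow>
        x (Suc t) s \<in> prox_set (\<eta> / (real m * p (J t s))) (g (J t s))
                        (z t s + (\<eta> / (real m * p (J t s))) *\<^sub>R y t (J t s) s)"
    and y_step: "\<And>t j s. s \<in> space M \<Longrightarrow> j \<in> {1..m} \<Longrightarrow>
        y (Suc t) j s = (if j = J t s
           then y t j s + (1 / (\<eta> / (real m * p j))) *\<^sub>R (z t s - x (Suc t) s)
           else y t j s)"
begin

definition dual_stepsize :: "nat \<Rightarrow> real" where
  "dual_stepsize j = \<eta> / (real m * p j)"

definition dual_distance :: "nat \<Rightarrow> 's \<Rightarrow> real" where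
  "dual_distance t s = (\<Sum>k\<in>{1..m}. (dual_stepsize k)\<^sup>2 * (norm (y t k s - ystar k))\<^sup>2)"

definition lyapunov :: "nat \<Rightarrow> real" where
  "lyapunov t = expectation (\<lambda>s. (norm (x t s - xstar))\<^sup>2) + expectation (dual_distance t)"

definition cross_term :: "nat \<Rightarrow> nat \<Rightarrow> 's \<Rightarrow> real" where
  "cross_term t k s = 2 * dual_stepsize k * ((z t s - xstar) \<bullet> (y t k s - ystar k))"

definition sampling_noise :: "nat \<Rightarrow> 's \<Rightarrow> real" where
  "sampling_noise t s =
     (\<Sum>k\<in>{1..m}. cross_term t k s * indicator {s \<in> space M. J t s = k} s - p k * cross_term t k s)"

lemma dual_stepsize_pos: "j \<in> {1..m} \<Longrightarrow> 0 < dual_stepsize j"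
  using m_pos eta_pos p_pos unfolding dual_stepsize_def by simp

lemma space_F [simp]: "space (F t) = space M"
  using F_subalgebra unfolding subalgebra_def by auto

lemma ybar_measurable: "ybar t \<in> borel_measurable (F t)"
proof -
  have "(\<lambda>s. (1 / real m) *\<^sub>R (\<Sum>j\<in>{1..m}. y t j s)) \<in> borel_measurable (F t)"
    using y_measurable by measurable
  then show ?thesis using ybar_average measurable_cong[of "F t" "ybar t"] by simp
qed

lemma z_subgrad:
  assumes "s \<in> space M"
  shows "subgrad R (z t s) ((1 / \<eta>) *\<^sub>R ((x t s - \<eta> *\<^sub>R v t s - \<eta> *\<^sub>R ybar t s) - z t s))"
  by (rule prox_set_subgrad[OF R_proper R_convex eta_pos z_step[OF assms]])

lemma xstar_subgrad: "subgrad R xstar ((1 / \<eta>) *\<^sub>R ((xstar + \<eta> *\<^sub>R rstar) - xstar))"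
  using rstar_subgrad eta_pos by simp

lemma z_measurable: "z t \<in> borel_measurable (F t)"
proof (rule borel_measurable_if_dist_le)
  show "(\<lambda>s. x t s - \<eta> *\<^sub>R v t s - \<eta> *\<^sub>R ybar t s) \<in> borel_measurable (F t)"
    using x_measurable v_measurable ybar_measurable by measurable
  fix s1 s2 assume "s1 \<in> space (F t)" "s2 \<in> space (F t)"
  then show "dist (z t s1) (z t s2)
      \<le> dist (x t s1 - \<eta> *\<^sub>R v t s1 - \<eta> *\<^sub>R ybar t s1) (x t s2 - \<eta> *\<^sub>R v t s2 - \<eta> *\<^sub>R ybar t s2)"
    unfolding dist_norm
    by (intro norm_le_if_power2_norm_le_inner subgrad_resolvent_firmly_nonexpansive[OF R_proper eta_pos] z_subgrad) auto
qed

lemma measurable_M_if_measurable_F: "h \<in> borel_measurable (F t) \<Longrightarrow> h \<in> borel_measurable M"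
  by (rule measurable_from_subalg[OF F_subalgebra])

lemma square_integrable_x: "square_integrable M (x t)"
  using x_square_integrable measurable_M_if_measurable_F[OF x_measurable] unfolding square_integrable_def by auto

lemma square_integrable_v: "square_integrable M (v t)"
  using v_square_integrable measurable_M_if_measurable_F[OF v_measurable] unfolding square_integrable_def by auto

lemma square_integrable_y: "square_integrable M (y t j)"
  using y_square_integrable measurable_M_if_measurable_F[OF y_measurable] unfolding square_integrable_def by auto

lemma square_integrable_constant:
  fixes c :: "'a::{real_normed_vector, second_countable_topology}"
  shows "square_integrable M (\<lambda>s. c)"
  by (rule square_integrable_const[OF finite_measure_axioms])

lemma square_integrable_ybar: "square_integrable M (ybar t)"
proof -
  have "square_integrable M (\<lambda>s. (1 / real m) *\<^sub>R (\<Sum>j\<in>{1..m}. y t j s))"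
    by (intro square_integrable_scaleR square_integrable_sum[OF finite_measure_axioms] square_integrable_y)
  then show ?thesis by (rule square_integrable_cong[rotated]) (simp add: ybar_average)
qed

lemma square_integrable_z: "square_integrable M (z t)"
proof -
  have "square_integrable M (\<lambda>s. z t s - xstar)"
  proof (rule square_integrable_if_norm_le)
    show "square_integrable M (\<lambda>s. (x t s - \<eta> *\<^sub>R v t s - \<eta> *\<^sub>R ybar t s) - (xstar + \<eta> *\<^sub>R rstar))"
      by (intro square_integrable_diff square_integrable_scaleR square_integrable_x square_integrable_v
          square_integrable_ybar square_integrable_constant)
    show "(\<lambda>s. z t s - xstar) \<in> borel_measurable M"
      using measurable_M_if_measurable_F[OF z_measurable] by measurable
    show "norm (z t s - xstar) \<le> norm ((x t s - \<eta> *\<^sub>R v t s - \<eta> *\<^sub>R ybar t s) - (xstar + \<eta> *\<^sub>R rstar))"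
      if "s \<in> space M" for s
      by (intro norm_le_if_power2_norm_le_inner subgrad_resolvent_firmly_nonexpansive[OF R_proper eta_pos]
          z_subgrad xstar_subgrad that)
  qed
  then show ?thesis using square_integrable_add[OF _ square_integrable_constant, of "\<lambda>s. z t s - xstar" xstar] by simp
qed

lemma rstar_eq: "rstar = - gstar - (1 / real m) *\<^sub>R (\<Sum>j\<in>{1..m}. ystar j)"
proof -
  have "rstar = (gstar + (1 / real m) *\<^sub>R (\<Sum>j\<in>{1..m}. ystar j) + rstar)
      - gstar - (1 / real m) *\<^sub>R (\<Sum>j\<in>{1..m}. ystar j)"
    by (simp add: algebra_simps)
  also have "\<dots> = - gstar - (1 / real m) *\<^sub>R (\<Sum>j\<in>{1..m}. ystar j)"
    unfolding optimality by simp
  finally show ?thesis .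
qed

lemma z_step_estimate:
  assumes "s \<in> space M"
  shows "(norm (z t s - xstar))\<^sup>2 + 2 * \<eta> * ((z t s - xstar) \<bullet> (ybar t s - (1 / real m) *\<^sub>R (\<Sum>j\<in>{1..m}. ystar j)))
    \<le> (norm ((x t s - \<eta> *\<^sub>R v t s) - (xstar - \<eta> *\<^sub>R gstar)))\<^sup>2"
proof -
  have "(norm (z t s - xstar))\<^sup>2
      \<le> ((x t s - \<eta> *\<^sub>R v t s - \<eta> *\<^sub>R ybar t s) - (xstar + \<eta> *\<^sub>R rstar)) \<bullet> (z t s - xstar)"
    by (rule subgrad_resolvent_firmly_nonexpansive[OF R_proper eta_pos z_subgrad[OF assms] xstar_subgrad])
  then have "(norm (z t s - xstar))\<^sup>2 + 2 * ((z t s - xstar) \<bullet>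
      (((x t s - \<eta> *\<^sub>R v t s) - (xstar - \<eta> *\<^sub>R gstar))
       - ((x t s - \<eta> *\<^sub>R v t s - \<eta> *\<^sub>R ybar t s) - (xstar + \<eta> *\<^sub>R rstar))))
    \<le> (norm ((x t s - \<eta> *\<^sub>R v t s) - (xstar - \<eta> *\<^sub>R gstar)))\<^sup>2"
    by (rule power2_norm_add_inner_le)
  moreover have "((x t s - \<eta> *\<^sub>R v t s) - (xstar - \<eta> *\<^sub>R gstar))
       - ((x t s - \<eta> *\<^sub>R v t s - \<eta> *\<^sub>R ybar t s) - (xstar + \<eta> *\<^sub>R rstar))
     = \<eta> *\<^sub>R (ybar t s - (1 / real m) *\<^sub>R (\<Sum>j\<in>{1..m}. ystar j))"
    by (simp add: rstar_eq algebra_simps)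
  ultimately show ?thesis by simp
qed

lemma x_step_estimate:
  assumes "s \<in> space M" and j: "j = J t s"
  shows "(norm (x (Suc t) s - xstar))\<^sup>2 + (dual_stepsize j)\<^sup>2 * (norm (y (Suc t) j s - ystar j))\<^sup>2
    \<le> (norm (z t s - xstar))\<^sup>2 + 2 * dual_stepsize j * ((z t s - xstar) \<bullet> (y t j s - ystar j))
       + (dual_stepsize j)\<^sup>2 * (norm (y t j s - ystar j))\<^sup>2"
proof -
  define c where "c = dual_stepsize j"
  have "j \<in> {1..m}" using J_range[OF assms(1)] j by simp
  then have "0 < c" unfolding c_def by (rule dual_stepsize_pos)
  have y_next': "y (Suc t) j s = y t j s + (1 / c) *\<^sub>R (z t s - x (Suc t) s)"
    using y_step[OF assms(1) \<open>j \<in> {1..m}\<close>, of t] j unfolding c_def dual_stepsize_def by simp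
  then have y_next: "c *\<^sub>R y (Suc t) j s = c *\<^sub>R y t j s + (z t s - x (Suc t) s)"
    using \<open>0 < c\<close> by (simp add: scaleR_add_right)
  have "x (Suc t) s \<in> prox_set c (g j) (z t s + c *\<^sub>R y t j s)"
    using x_step[OF assms(1), of t] unfolding c_def dual_stepsize_def j .
  then have "subgrad (g j) (x (Suc t) s) ((1 / c) *\<^sub>R ((z t s + c *\<^sub>R y t j s) - x (Suc t) s))"
    using g_proper g_convex \<open>j \<in> {1..m}\<close> \<open>0 < c\<close> by (intro prox_set_subgrad) auto
  moreover have "(1 / c) *\<^sub>R ((z t s + c *\<^sub>R y t j s) - x (Suc t) s) = y (Suc t) j s"
    unfolding y_next' using \<open>0 < c\<close> by (simp add: algebra_simps)
  ultimately have "subgrad (g j) (x (Suc t) s) (y (Suc t) j s)" by simp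
  then have "0 \<le> (y (Suc t) j s - ystar j) \<bullet> (x (Suc t) s - xstar)"
    using \<open>j \<in> {1..m}\<close> by (intro subgrad_monotone[OF g_proper _ ystar_subgrad])
  then have "(norm (x (Suc t) s - xstar))\<^sup>2 + c\<^sup>2 * (norm (y (Suc t) j s - ystar j))\<^sup>2
      \<le> (norm ((x (Suc t) s - xstar) + c *\<^sub>R (y (Suc t) j s - ystar j)))\<^sup>2"
    using \<open>0 < c\<close> by (intro power2_norm_add_scaleR_ge) (simp add: inner_commute)
  also have "(x (Suc t) s - xstar) + c *\<^sub>R (y (Suc t) j s - ystar j) = (z t s - xstar) + c *\<^sub>R (y t j s - ystar j)"
    using y_next by (simp add: algebra_simps)
  finally show ?thesis unfolding c_def power2_norm_add_scaleR by simp
qed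

lemma sum_weighted_cross_term:
  assumes "s \<in> space M"
  shows "(\<Sum>k\<in>{1..m}. p k * cross_term t k s)
    = 2 * \<eta> * ((z t s - xstar) \<bullet> (ybar t s - (1 / real m) *\<^sub>R (\<Sum>j\<in>{1..m}. ystar j)))"
proof -
  have "(\<Sum>k\<in>{1..m}. p k * cross_term t k s)
      = (2 * \<eta> / real m) * (\<Sum>k\<in>{1..m}. (z t s - xstar) \<bullet> (y t k s - ystar k))"
    unfolding sum_distrib_left
  proof (intro sum.cong refl)
    fix k assume "k \<in> {1..m}"
    then have "p k \<noteq> 0" using p_pos by fastforce
    then show "p k * cross_term t k s = (2 * \<eta> / real m) * ((z t s - xstar) \<bullet> (y t k s - ystar k))"
      by (simp add: cross_term_def dual_stepsize_def)
  qed
  also have "\<dots> = 2 * \<eta> * ((z t s - xstar) \<bullet> ((1 / real m) *\<^sub>R (\<Sum>k\<in>{1..m}. y t k s - ystar k)))"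
    by (simp add: inner_sum_right)
  also have "(1 / real m) *\<^sub>R (\<Sum>k\<in>{1..m}. y t k s - ystar k)
      = ybar t s - (1 / real m) *\<^sub>R (\<Sum>j\<in>{1..m}. ystar j)"
    using ybar_average[OF assms] by (simp add: sum_subtractf scaleR_diff_right)
  finally show ?thesis .
qed

lemma lyapunov_integrand_step:
  assumes "s \<in> space M"
  shows "(norm (x (Suc t) s - xstar))\<^sup>2 + dual_distance (Suc t) s
    \<le> (norm ((x t s - \<eta> *\<^sub>R v t s) - (xstar - \<eta> *\<^sub>R gstar)))\<^sup>2 + dual_distance t s + sampling_noise t s"
proof -
  define j where "j = J t s"
  have "j \<in> {1..m}" using J_range[OF assms] unfolding j_def .
  have "dual_distance (Suc t) s = dual_distance t s
        + ((dual_stepsize j)\<^sup>2 * (norm (y (Suc t) j s - ystar j))\<^sup>2 - (dual_stepsize j)\<^sup>2 * (norm (y t j s - ystar j))\<^sup>2)"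
    using \<open>j \<in> {1..m}\<close> y_step[OF assms] unfolding dual_distance_def j_def by (intro sum_update_single) auto
  moreover have "(\<Sum>k\<in>{1..m}. cross_term t k s * indicator {s \<in> space M. J t s = k} s) = cross_term t j s"
    using \<open>j \<in> {1..m}\<close> assms by (simp add: j_def indicator_def)
  moreover note sum_weighted_cross_term[OF assms, of t]
  moreover have "cross_term t j s = 2 * dual_stepsize j * ((z t s - xstar) \<bullet> (y t j s - ystar j))"
    unfolding cross_term_def ..
  moreover have "sampling_noise t s
      = (\<Sum>k\<in>{1..m}. cross_term t k s * indicator {s \<in> space M. J t s = k} s) - (\<Sum>k\<in>{1..m}. p k * cross_term t k s)"
    unfolding sampling_noise_def by (rule sum_subtractf)
  ultimately show ?thesis
    using x_step_estimate[OF assms j_def] z_step_estimate[OF assms, of t] by linarith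
qed

lemma sampled_set_measurable: "{s \<in> space M. J t s = k} \<in> sets M"
proof -
  have "J t -` {k} \<inter> space (F (Suc t)) \<in> sets (F (Suc t))"
    using J_measurable[of t] by (rule measurable_sets) simp
  then have "{s \<in> space M. J t s = k} \<in> sets (F (Suc t))" by (simp add: vimage_def Int_def conj_commute)
  then show ?thesis using F_subalgebra[of "Suc t"] unfolding subalgebra_def by auto
qed

lemma integrable_norm_sq_diff:
  fixes f :: "'s \<Rightarrow> 'a::{real_normed_vector, second_countable_topology}"
  assumes "square_integrable M f"
  shows "integrable M (\<lambda>s. (norm (f s - c))\<^sup>2)"
  using square_integrable_diff[OF assms square_integrable_constant] unfolding square_integrable_def by auto

lemma integrable_dual_distance: "integrable M (dual_distance t)"
  unfolding dual_distance_def by (intro Bochner_Integration.integrable_sum integrable_mult_right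
      integrable_norm_sq_diff square_integrable_y)

lemma integrable_cross_term: "integrable M (cross_term t k)"
  unfolding cross_term_def
  by (intro integrable_mult_right integrable_inner_if_square_integrable square_integrable_diff
      square_integrable_z square_integrable_y square_integrable_constant)

lemma integrable_sampling_noise: "integrable M (sampling_noise t)"
  unfolding sampling_noise_def
  by (intro Bochner_Integration.integrable_sum Bochner_Integration.integrable_diff integrable_mult_right
      integrable_real_mult_indicator sampled_set_measurable integrable_cross_term)

lemma expectation_sampling_noise: "expectation (sampling_noise t) = 0"
proof -
  have "expectation (\<lambda>s. cross_term t k s * indicator {s \<in> space M. J t s = k} s)
      = p k * expectation (cross_term t k)" if "k \<in> {1..m}" for k
  proof (rule integral_mult_indicator_indep[OF F_subalgebra sampled_set_measurable])
    show "cross_term t k \<in> borel_measurable (F t)"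
      unfolding cross_term_def using z_measurable y_measurable by measurable
  qed (auto intro: J_indep[OF _ that] less_imp_le[OF p_pos[OF that]])
  then show ?thesis
    unfolding sampling_noise_def
    by (simp add: Bochner_Integration.integral_sum Bochner_Integration.integral_diff
        integrable_real_mult_indicator sampled_set_measurable integrable_cross_term)
qed

lemma lyapunov_step:
  "lyapunov (Suc t) \<le> expectation (\<lambda>s. (norm ((x t s - \<eta> *\<^sub>R v t s) - (xstar - \<eta> *\<^sub>R gstar)))\<^sup>2)
     + expectation (dual_distance t)"
proof -
  have integrable_error: "integrable M (\<lambda>s. (norm ((x t s - \<eta> *\<^sub>R v t s) - (xstar - \<eta> *\<^sub>R gstar)))\<^sup>2)"
    by (intro integrable_norm_sq_diff square_integrable_diff square_integrable_scaleR
        square_integrable_x square_integrable_v)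
  have "lyapunov (Suc t) = expectation (\<lambda>s. (norm (x (Suc t) s - xstar))\<^sup>2 + dual_distance (Suc t) s)"
    unfolding lyapunov_def
    by (simp add: integrable_norm_sq_diff square_integrable_x integrable_dual_distance)
  also have "\<dots> \<le> expectation (\<lambda>s. (norm ((x t s - \<eta> *\<^sub>R v t s) - (xstar - \<eta> *\<^sub>R gstar)))\<^sup>2
      + dual_distance t s + sampling_noise t s)"
    by (intro integral_mono lyapunov_integrand_step Bochner_Integration.integrable_add integrable_error
        integrable_norm_sq_diff square_integrable_x integrable_dual_distance integrable_sampling_noise)
  also have "\<dots> = expectation (\<lambda>s. (norm ((x t s - \<eta> *\<^sub>R v t s) - (xstar - \<eta> *\<^sub>R gstar)))\<^sup>2)
      + expectation (dual_distance t) + expectation (sampling_noise t)"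
    by (simp add: integrable_error integrable_dual_distance integrable_sampling_noise)
  finally show ?thesis by (simp add: expectation_sampling_noise)
qed

lemma lyapunov_nonneg: "0 \<le> lyapunov t"
proof -
  have "0 \<le> dual_distance t s" for s unfolding dual_distance_def by (intro sum_nonneg) auto
  then show ?thesis unfolding lyapunov_def by (intro add_nonneg_nonneg Bochner_Integration.integral_nonneg) auto
qed

lemma lyapunov_initial:
  assumes "\<And>s. s \<in> space M \<Longrightarrow> x 0 s = x0" and "\<And>j s. s \<in> space M \<Longrightarrow> j \<in> {1..m} \<Longrightarrow> y 0 j s = y0 j"
  shows "lyapunov 0 = (norm (x0 - xstar))\<^sup>2 + (\<Sum>k\<in>{1..m}. (dual_stepsize k)\<^sup>2 * (norm (y0 k - ystar k))\<^sup>2)"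
proof -
  have "expectation (\<lambda>s. (norm (x 0 s - xstar))\<^sup>2) = expectation (\<lambda>s. (norm (x0 - xstar))\<^sup>2)"
    using assms(1) by (intro Bochner_Integration.integral_cong) auto
  moreover have "expectation (dual_distance 0)
      = expectation (\<lambda>s. \<Sum>k\<in>{1..m}. (dual_stepsize k)\<^sup>2 * (norm (y0 k - ystar k))\<^sup>2)"
    using assms(2) unfolding dual_distance_def by (intro Bochner_Integration.integral_cong sum.cong) auto
  ultimately show ?thesis unfolding lyapunov_def by (simp add: prob_space)
qed

lemma expectation_bregman_ergodic_le:
  fixes f :: "'d \<Rightarrow> real" and Mseq :: "nat \<Rightarrow> real"
  assumes "continuous_on UNIV f" "L_smooth L f gradf" "strongly_convex \<mu> f gradf" "0 \<le> \<mu>"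
    and "0 < om" "\<And>t. 0 \<le> Mseq t"
    and estimator: "\<And>t.
        expectation (\<lambda>s. (norm ((x t s - \<eta> *\<^sub>R v t s) - (xstar - \<eta> *\<^sub>R gstar)))\<^sup>2) + Mseq (Suc t)
        \<le> expectation (\<lambda>s. (norm (x t s - xstar))\<^sup>2)
          - om * \<eta> * expectation (\<lambda>s. bregman f gradf (x t s) xstar) + Mseq t"
    and "1 \<le> t"
  shows "expectation (\<lambda>s. bregman f gradf ((1 / real t) *\<^sub>R (\<Sum>k<t. x k s)) xstar)
    \<le> 1 / (om * \<eta> * real t) * (lyapunov 0 + Mseq 0)"
proof -
  define D where "D k = expectation (\<lambda>s. bregman f gradf (x k s) xstar)" for k
  have "lyapunov (Suc k) + Mseq (Suc k) \<le> (lyapunov k + Mseq k) - om * \<eta> * D k" for k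
    using lyapunov_step[of k] estimator[of k] unfolding lyapunov_def D_def by linarith
  then have "(\<Sum>k<t. om * \<eta> * D k) \<le> (lyapunov 0 + Mseq 0) - (lyapunov t + Mseq t)"
    by (rule sum_le_if_descent)
  then have descent: "om * \<eta> * (\<Sum>k<t. D k) \<le> lyapunov 0 + Mseq 0"
    using lyapunov_nonneg[of t] assms(6)[of t] by (simp add: sum_distrib_left)
  have "expectation (\<lambda>s. bregman f gradf ((1 / real t) *\<^sub>R (\<Sum>k<t. x k s)) xstar) \<le> (1 / real t) * (\<Sum>k<t. D k)"
    unfolding D_def using assms(1-4) \<open>1 \<le> t\<close>
    by (intro integral_bregman_average_le integrable_bregman integrable_norm_sq_diff square_integrable_x
        measurable_M_if_measurable_F[OF x_measurable]) auto
  also have "\<dots> \<le> 1 / (om * \<eta> * real t) * (lyapunov 0 + Mseq 0)"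
    using descent \<open>0 < om\<close> eta_pos \<open>1 \<le> t\<close> by (simp add: field_simps)
  finally show ?thesis .
qed

end

theorem theorem1:
  fixes f :: "'d::euclidean_space \<Rightarrow> real" and gradf :: "'d \<Rightarrow> 'd"
    and g :: "nat \<Rightarrow> 'd \<Rightarrow> ereal" and R :: "'d \<Rightarrow> ereal"
    and m :: nat and L \<mu> :: real
    and xstar rstar :: 'd and ystar :: "nat \<Rightarrow> 'd"
    and \<eta> \<eta>0 om :: real and p :: "nat \<Rightarrow> real" and Mseq :: "nat \<Rightarrow> real"
    and Mprob :: "'s measure" and Fil :: "nat \<Rightarrow> 's measure"
    and x v z ybar :: "nat \<Rightarrow> 's \<Rightarrow> 'd" and y :: "nat \<Rightarrow> nat \<Rightarrow> 's \<Rightarrow> 'd"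
    and J :: "nat \<Rightarrow> 's \<Rightarrow> nat"
    and x0 :: 'd and y0 :: "nat \<Rightarrow> 'd"
  assumes m_pos: "1 \<le> m"
    and f_grad: "\<And>u. (f has_derivative (\<lambda>h. gradf u \<bullet> h)) (at u)"
    and f_smooth: "L_smooth L f gradf"
    and mu_nonneg: "0 \<le> \<mu>"
    and f_sc: "strongly_convex \<mu> f gradf"
    and g_pcc: "\<And>j. j \<in> {1..m} \<Longrightarrow> proper_fun (g j) \<and> closed_fun (g j) \<and> convex_fun (g j)"
    and R_pcc: "proper_fun R \<and> closed_fun R \<and> convex_fun R"
    and xstar_min: "\<And>u. Fobj f m g R xstar \<le> Fobj f m g R u"
    and ystar_sub: "\<And>j. j \<in> {1..m} \<Longrightarrow> subgrad (g j) xstar (ystar j)"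
    and rstar_sub: "subgrad R xstar rstar"
    and opt: "gradf xstar + (1 / real m) *\<^sub>R (\<Sum>j\<in>{1..m}. ystar j) + rstar = 0"
    and eta_pos: "0 < \<eta>" and eta0_pos: "0 < \<eta>0" and eta_le: "\<eta> \<le> \<eta>0" and om_pos: "0 < om"
    and p_pos: "\<And>j. j \<in> {1..m} \<Longrightarrow> 0 < p j" and p_sum: "(\<Sum>j\<in>{1..m}. p j) = 1"
    and prob: "prob_space Mprob"
    and Fil_sub: "\<And>t. subalgebra Mprob (Fil t)"
    and Fil_mono: "\<And>t. sets (Fil t) \<subseteq> sets (Fil (Suc t))"
    and x_meas: "\<And>t. x t \<in> borel_measurable (Fil t)"
    and v_meas: "\<And>t. v t \<in> borel_measurable (Fil t)"
    and y_meas: "\<And>t j. y t j \<in> borel_measurable (Fil t)"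
    and J_meas: "\<And>t. J t \<in> measurable (Fil (Suc t)) (count_space UNIV)"
    and x_sq: "\<And>t. integrable Mprob (\<lambda>s. (norm (x t s))\<^sup>2)"
    and v_sq: "\<And>t. integrable Mprob (\<lambda>s. (norm (v t s))\<^sup>2)"
    and y_sq: "\<And>t j. integrable Mprob (\<lambda>s. (norm (y t j s))\<^sup>2)"
    and J_range: "\<And>t s. s \<in> space Mprob \<Longrightarrow> J t s \<in> {1..m}"
    and J_indep: "\<And>t k A. A \<in> sets (Fil t) \<Longrightarrow> k \<in> {1..m} \<Longrightarrow>
        measure Mprob (A \<inter> {s \<in> space Mprob. J t s = k}) = measure Mprob A * p k"
    and x_init: "\<And>s. s \<in> space Mprob \<Longrightarrow> x 0 s = x0"
    and y_init: "\<And>j s. s \<in> space Mprob \<Longrightarrow> j \<in> {1..m} \<Longrightarrow> y 0 j s = y0 j"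
    and ybar_init: "\<And>s. s \<in> space Mprob \<Longrightarrow> ybar 0 s = (1 / real m) *\<^sub>R (\<Sum>j\<in>{1..m}. y0 j)"
    and z_step: "\<And>t s. s \<in> space Mprob \<Longrightarrow>
        z t s \<in> prox_set \<eta> R (x t s - \<eta> *\<^sub>R v t s - \<eta> *\<^sub>R ybar t s)"
    and x_step: "\<And>t s. s \<in> space Mprob \<Longrightarrow>
        x (Suc t) s \<in> prox_set (\<eta> / (real m * p (J t s))) (g (J t s))
                        (z t s + (\<eta> / (real m * p (J t s))) *\<^sub>R y t (J t s) s)"
    and y_step: "\<And>t j s. s \<in> space Mprob \<Longrightarrow> j \<in> {1..m} \<Longrightarrow>
        y (Suc t) j s = (if j = J t s
           then y t j s + (1 / (\<eta> / (real m * p j))) *\<^sub>R (z t s - x (Suc t) s)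
           else y t j s)"
    and ybar_step: "\<And>t s. s \<in> space Mprob \<Longrightarrow>
        ybar (Suc t) s = ybar t s + (1 / real m) *\<^sub>R (y (Suc t) (J t s) s - y t (J t s) s)"
    and M_nonneg: "\<And>t. 0 \<le> Mseq t"
    and cond_a: "\<And>t.
        prob_space.expectation Mprob (\<lambda>s. (norm ((x t s - \<eta> *\<^sub>R v t s) - (xstar - \<eta> *\<^sub>R gradf xstar)))\<^sup>2)
          + Mseq (Suc t)
        \<le> prob_space.expectation Mprob (\<lambda>s. (norm (x t s - xstar))\<^sup>2)
          - om * \<eta> * prob_space.expectation Mprob (\<lambda>s. bregman f gradf (x t s) xstar)
          + Mseq t"
    and cond_b: "(\<forall>t. Mseq t = 0) \<or> (\<exists>\<rho>>0. \<forall>t.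
        prob_space.expectation Mprob (\<lambda>s. (norm ((x t s - \<eta> *\<^sub>R v t s) - (xstar - \<eta> *\<^sub>R gradf xstar)))\<^sup>2)
          + Mseq (Suc t)
        \<le> (1 - om * \<eta> * \<mu>) * prob_space.expectation Mprob (\<lambda>s. (norm (x t s - xstar))\<^sup>2)
          + (1 - \<rho>) * Mseq t)"
  shows "\<forall>t\<ge>1.
    prob_space.expectation Mprob
      (\<lambda>s. bregman f gradf ((1 / real t) *\<^sub>R (\<Sum>k<t. x k s)) xstar)
    \<le> 1 / (om * \<eta> * real t) *
       ((norm (x0 - xstar))\<^sup>2 + Mseq 0
        + (\<Sum>k\<in>{1..m}. (\<eta> / (real m * p k))\<^sup>2 * (norm (y0 k - ystar k))\<^sup>2))"
proof -
  have ybar_average: "ybar k s = (1 / real m) *\<^sub>R (\<Sum>j\<in>{1..m}. y k j s)" if "s \<in> space Mprob" for k s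
  proof (rule running_average_eq[where ybar="\<lambda>k. ybar k s" and y="\<lambda>k j. y k j s" and J="\<lambda>k. J k s"])
    show "ybar 0 s = (1 / real m) *\<^sub>R (\<Sum>j\<in>{1..m}. y 0 j s)"
      using that by (simp add: ybar_init y_init)
    show "y (Suc k) j s = y k j s" if "j \<in> {1..m}" "j \<noteq> J k s" for k j
      using y_step[OF \<open>s \<in> space Mprob\<close> that(1)] that(2) by simp
  qed (use that J_range ybar_step in auto)
  interpret stochastic_decoupling Mprob Fil m p \<eta> R g xstar ystar rstar "gradf xstar" x v z ybar y J
  proof (intro stochastic_decoupling.intro stochastic_decoupling_axioms.intro)
  qed (fact assms ybar_average | use R_pcc g_pcc in blast)+
  have "continuous_on UNIV f"
    using f_grad by (intro continuous_at_imp_continuous_on ballI has_derivative_continuous) blast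
  note ergodic_bound = expectation_bregman_ergodic_le[OF this f_smooth f_sc mu_nonneg om_pos M_nonneg cond_a]
  have initial: "lyapunov 0 + Mseq 0 = (norm (x0 - xstar))\<^sup>2 + Mseq 0
      + (\<Sum>k\<in>{1..m}. (\<eta> / (real m * p k))\<^sup>2 * (norm (y0 k - ystar k))\<^sup>2)"
    using lyapunov_initial[OF x_init y_init] unfolding dual_stepsize_def by simp
  show ?thesis using ergodic_bound unfolding initial by blast
qed

end
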